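(* Let $\mathcal{U}\subseteq\mathbb{R}^d$ and $\mathcal{V}\subseteq\mathbb{R}^D$ be compact with $\|u\|\le B$ for all $u\in\mathcal{U}$. Let $f:\mathcal{U}\times\mathcal{V}\to\mathbb{R}$ be continuous, with $f(\cdot,v)$ convex and differentiable for each $v$, $f(u,\cdot)$ $l$-Lipschitz for each $u$, and $\nabla_u f(u,\cdot)$ $r$-Lipschitz for each $u$. Fix $u_0\in\mathcal{U}$ with $R(u_0)$ and $S(u_0)$ finite, let $\zeta$ be the gap $\zeta=\phi(u_0)-\max_{v\in S(u_0)\setminus R(u_0)}f(u_0,v)$ ($\zeta=\infty$ if $S(u_0)=R(u_0)$), let $0\le\epsilon<\zeta$, $A\subseteq\mathcal{V}$ finite, and $0\le\delta<\tfrac12(\zeta-\epsilon)/l$ with $d_H(R(u_0),A)\le\delta$ and $d_H(A,S(u_0))\le\delta$. Then every $z'\in\mathrm{co}\{\nabla_u f(u_0,v): v\in R^\epsilon_A(u_0)\}$ is a $(2r\delta B)$-subgradient of $\phi$ at $u_0$, i.e. $\phi(u)-\phi(u_0)\ge\langle z',u-u_0\rangle-2r\delta B$ for all $u\in\mathcal{U}$.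
   Context: Definitions: $\phi(u)=\max_{v\in\mathcal{V}} f(u,v)$, $R(u)=\{v\in\mathcal{V}: f(u,v)=\phi(u)\}$, $S(u)=\{v_0\in\mathcal{V}:\exists r>0,\ \forall v\in\mathcal{V},\ \|v_0-v\|\le r\Rightarrow f(u,v_0)\ge f(u,v)\}$. For finite $A$: $\phi_A(u)=\max_{v\in A}f(u,v)$, $R^\epsilon_A(u)=\{v\in A:\phi_A(u)-f(u,v)\le\epsilon\}$. $d_H(X,Y)=\max_{x\in X}\min_{y\in Y}\|x-y\|$. $\mathrm{co}$ denotes convex hull. *)

theory Defs
  imports "HOL-Analysis.Analysis"
begin

text \<open>phi(u) = max over V of f(u,v) (attained since V compact and f continuous)\<close>
definition phi :: "('a \<Rightarrow> 'b \<Rightarrow> real) \<Rightarrow> 'b set \<Rightarrow> 'a \<Rightarrow> real" where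
  "phi f V u = (SUP v\<in>V. f u v)"

definition Rset :: "('a \<Rightarrow> 'b \<Rightarrow> real) \<Rightarrow> 'b set \<Rightarrow> 'a \<Rightarrow> 'b set" where
  "Rset f V u = {v\<in>V. f u v = phi f V u}"

definition Sset :: "('a \<Rightarrow> 'b::real_normed_vector \<Rightarrow> real) \<Rightarrow> 'b set \<Rightarrow> 'a \<Rightarrow> 'b set" where
  "Sset f V u = {v0\<in>V. \<exists>r>0. \<forall>v\<in>V. norm (v0 - v) \<le> r \<longrightarrow> f u v0 \<ge> f u v}"

definition phiA :: "('a \<Rightarrow> 'b \<Rightarrow> real) \<Rightarrow> 'b set \<Rightarrow> 'a \<Rightarrow> real" where
  "phiA f A u = Max (f u ` A)"

definition RepsA :: "('a \<Rightarrow> 'b \<Rightarrow> real) \<Rightarrow> 'b set \<Rightarrow> real \<Rightarrow> 'a \<Rightarrow> 'b set" where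
  "RepsA f A \<epsilon> u = {v\<in>A. phiA f A u - f u v \<le> \<epsilon>}"

definition dH :: "'b::metric_space set \<Rightarrow> 'b set \<Rightarrow> real" where
  "dH X Y = (SUP x\<in>X. INF y\<in>Y. dist x y)"

end

theory Submission
  imports Defs
begin

text \<open>
  Each point of \<open>R\<^sup>\<epsilon>\<^sub>A(u\<^sub>0)\<close> lies within \<open>\<delta>\<close> of a global maximiser: it is \<open>\<delta>\<close>-close to some
  local maximiser \<open>s\<close>, and if \<open>s\<close> were not global then, by the \<open>l\<close>-Lipschitz bound and
  \<open>d\<^sub>H(R(u\<^sub>0), A) \<le> \<delta>\<close>, its value would fall short of \<open>\<phi>\<^sub>A(u\<^sub>0) - \<epsilon>\<close>, contradicting the gap
  assumption. For a global maximiser \<open>w\<close> the gradient \<open>\<nabla>\<^sub>uf(u\<^sub>0,w)\<close> is an exact subgradient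
  of \<open>\<phi>\<close> by convexity of \<open>f(\<cdot>,w)\<close>, and replacing it by a gradient at a \<open>\<delta>\<close>-close point
  costs at most \<open>r\<delta> \<cdot> \<parallel>u - u\<^sub>0\<parallel> \<le> 2r\<delta>B\<close>. The subgradient inequality is a half-space
  condition, so it passes to convex hulls.
\<close>

lemma convex_on_UNIV_imp_above_tangent:
  fixes g :: "'a::real_normed_vector \<Rightarrow> real"
  assumes convex: "convex_on UNIV g" and deriv: "(g has_derivative D) (at x)"
  shows "g y - g x \<ge> D (y - x)"
proof -
  define h where "h = y - x"
  define k where "k t = g (x + t *\<^sub>R h)" for t :: real
  have "convex_on UNIV k"
  proof (rule convex_onI)
    fix t a b :: real assume t: "0 < t" "t < 1"
    have "x + ((1 - t) *\<^sub>R a + t *\<^sub>R b) *\<^sub>R h = (1 - t) *\<^sub>R (x + a *\<^sub>R h) + t *\<^sub>R (x + b *\<^sub>R h)"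
      by (simp add: algebra_simps)
    then show "k ((1 - t) *\<^sub>R a + t *\<^sub>R b) \<le> (1 - t) * k a + t * k b"
      unfolding k_def using convex_onD[OF convex, of t] t by simp
  qed simp
  moreover have "(k has_field_derivative D h) (at 0)"
  proof -
    have line: "((\<lambda>t::real. x + t *\<^sub>R h) has_derivative (\<lambda>t. t *\<^sub>R h)) (at 0)"
      by (auto intro!: derivative_eq_intros)
    have "(k has_derivative (\<lambda>t. D (t *\<^sub>R h))) (at 0)"
      unfolding k_def using has_derivative_compose[OF line, of g D] deriv by (simp add: o_def)
    moreover have "(\<lambda>t. D (t *\<^sub>R h)) = (\<lambda>t. D h * t)"
      using has_derivative_linear[OF deriv] by (simp add: linear_scale mult.commute)
    ultimately show ?thesis by (simp add: has_field_derivative_def)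
  qed
  ultimately have "k 1 - k 0 \<ge> D h * (1 - 0)"
    by (intro convex_on_imp_above_tangent) auto
  then show ?thesis by (simp add: k_def h_def)
qed

lemma lipschitz_on_dist_le:
  assumes "L-lipschitz_on X f" "x \<in> X" "y \<in> X" "dist x y \<le> \<delta>"
  shows "dist (f x) (f y) \<le> L * \<delta>"
  using lipschitz_onD[OF assms(1-3)] mult_left_mono[OF assms(4) lipschitz_on_nonneg[OF assms(1)]]
  by linarith

lemma convex_hull_inner_le:
  assumes "\<And>x. x \<in> S \<Longrightarrow> a \<bullet> x \<le> c" and "z \<in> convex hull S"
  shows "a \<bullet> z \<le> c"
proof -
  have "convex hull S \<subseteq> {x. a \<bullet> x \<le> c}"
    using assms(1) by (intro hull_minimal convex_halfspace_le) auto
  then show ?thesis using assms(2) by auto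
qed

lemma dH_le_imp_close:
  fixes X Y :: "'b::metric_space set"
  assumes "w \<in> X" "finite X" "finite Y" "Y \<noteq> {}" "dH X Y \<le> \<delta>"
  shows "\<exists>y\<in>Y. dist w y \<le> \<delta>"
proof -
  have "(INF y\<in>Y. dist w y) \<le> dH X Y"
    unfolding dH_def using assms(1,2) by (intro cSUP_upper) auto
  moreover have "(INF y\<in>Y. dist w y) \<in> (\<lambda>y. dist w y) ` Y"
    using assms(3,4) by (simp add: cInf_eq_Min)
  ultimately show ?thesis using assms(5) by force
qed

lemma phi_upper:
  assumes "compact V" "continuous_on V (f u)" "v \<in> V"
  shows "f u v \<le> phi f V u"
  unfolding phi_def using assms
  by (intro cSUP_upper bounded_imp_bdd_above compact_imp_bounded compact_continuous_image)

lemma Rset_nonempty: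
  assumes "compact V" "V \<noteq> {}" "continuous_on V (f u)"
  shows "Rset f V u \<noteq> {}"
proof -
  obtain x where x: "x \<in> V" "\<And>y. y \<in> V \<Longrightarrow> f u y \<le> f u x"
    using continuous_attains_sup[OF assms] by blast
  have "phi f V u \<le> f u x"
    unfolding phi_def using assms(2) x(2) by (rule cSUP_least)
  then have "phi f V u = f u x"
    using phi_upper[where f = f and u = u, OF assms(1,3) x(1)] by linarith
  then show ?thesis using x(1) unfolding Rset_def by auto
qed

lemma Rset_subset_Sset:
  assumes "compact V" "continuous_on V (f u)"
  shows "Rset f V u \<subseteq> Sset f V u"
  unfolding Rset_def Sset_def using phi_upper[where f = f and u = u, OF assms] by (auto intro!: exI[of _ 1])

lemma RepsA_close_to_Rset:
  fixes V :: "'b::real_normed_vector set"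
  assumes V: "compact V" and lip: "l-lipschitz_on V (f u)"
    and R_fin: "finite (Rset f V u)" and S_fin: "finite (Sset f V u)"
    and A: "A \<subseteq> V" "finite A"
    and gap: "Sset f V u \<noteq> Rset f V u \<Longrightarrow>
              2 * l * \<delta> < (phi f V u - Max (f u ` (Sset f V u - Rset f V u))) - \<epsilon>"
    and dH_RA: "dH (Rset f V u) A \<le> \<delta>" and dH_AS: "dH A (Sset f V u) \<le> \<delta>"
    and v: "v \<in> RepsA f A \<epsilon> u"
  shows "\<exists>w\<in>Rset f V u. dist v w \<le> \<delta>"
proof -
  have vA: "v \<in> A" and v_eps: "phiA f A u - f u v \<le> \<epsilon>"
    using v unfolding RepsA_def by auto
  have cont: "continuous_on V (f u)" using lip by (rule lipschitz_on_continuous_on)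
  have "Rset f V u \<noteq> {}" using Rset_nonempty[where f = f and u = u, OF V _ cont] vA A by blast
  then obtain x where x: "x \<in> Rset f V u" by blast
  then have xV: "x \<in> V" and fx: "f u x = phi f V u" unfolding Rset_def by auto
  have "Sset f V u \<noteq> {}" using x Rset_subset_Sset[where f = f and u = u, OF V cont] by blast
  then obtain s where s: "s \<in> Sset f V u" "dist v s \<le> \<delta>"
    using dH_le_imp_close[OF vA A(2) S_fin _ dH_AS] by blast
  obtain a where a: "a \<in> A" "dist x a \<le> \<delta>"
    using dH_le_imp_close[OF x R_fin A(2) _ dH_RA] vA by blast
  have "s \<in> Rset f V u"
  proof (rule ccontr)
    assume s_not_R: "s \<notin> Rset f V u"
    have sV: "s \<in> V" using s(1) unfolding Sset_def by auto
    have "f u s \<le> Max (f u ` (Sset f V u - Rset f V u))"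
      using s(1) s_not_R S_fin by (intro Max_ge) auto
    moreover have "f u v - f u s \<le> l * \<delta>"
      using lipschitz_on_dist_le[OF lip _ sV s(2)] vA A by (auto simp: dist_real_def)
    moreover have "f u x - f u a \<le> l * \<delta>"
      using lipschitz_on_dist_le[OF lip xV _ a(2)] a A by (auto simp: dist_real_def)
    moreover have "f u a \<le> phiA f A u"
      unfolding phiA_def using a A by (intro Max_ge) auto
    ultimately show False
      using gap s(1) s_not_R v_eps fx by fastforce
  qed
  then show ?thesis using s(2) by blast
qed

lemma Rset_gradient_approx_subgradient:
  assumes w: "w \<in> Rset f V u0"
    and convex: "convex_on UNIV (\<lambda>u. f u w)"
    and deriv: "((\<lambda>u. f u w) has_derivative (\<lambda>h. G \<bullet> h)) (at u0)"
    and below_phi: "f u w \<le> phi f V u"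
    and g_close: "norm (g - G) \<le> e" and u_close: "norm (u - u0) \<le> D"
  shows "phi f V u - phi f V u0 \<ge> g \<bullet> (u - u0) - e * D"
proof -
  have "G \<bullet> (u - u0) \<le> f u w - f u0 w"
    using convex_on_UNIV_imp_above_tangent[OF convex deriv] .
  moreover have "f u0 w = phi f V u0" using w unfolding Rset_def by auto
  moreover have "(g - G) \<bullet> (u - u0) \<le> e * D"
    using norm_cauchy_schwarz[of "g - G" "u - u0"]
      mult_mono[OF g_close u_close order_trans[OF norm_ge_zero g_close] norm_ge_zero]
    by linarith
  ultimately show ?thesis using below_phi by (simp add: inner_diff_left)
qed

theorem mainTheorem4:
  fixes U :: "'a::euclidean_space set" and V :: "'b::euclidean_space set"
    and f :: "'a \<Rightarrow> 'b \<Rightarrow> real" and G :: "'a \<Rightarrow> 'b \<Rightarrow> 'a"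
    and B l r \<epsilon> \<delta> :: real and u0 :: 'a and A :: "'b set"
  assumes U_compact: "compact U" and V_compact: "compact V"
    and U_bound: "\<forall>u\<in>U. norm u \<le> B"
    and f_cont: "continuous_on (U \<times> V) (\<lambda>(u, v). f u v)"
    and f_convex: "\<forall>v\<in>V. convex_on UNIV (\<lambda>u. f u v)"
    and f_grad: "\<forall>v\<in>V. \<forall>u. ((\<lambda>u'. f u' v) has_derivative (\<lambda>h. G u v \<bullet> h)) (at u)"
    and f_lip: "\<forall>u\<in>U. l-lipschitz_on V (\<lambda>v. f u v)"
    and G_lip: "\<forall>u\<in>U. r-lipschitz_on V (\<lambda>v. G u v)"
    and u0: "u0 \<in> U"
    and R_fin: "finite (Rset f V u0)" and S_fin: "finite (Sset f V u0)"
    and eps: "0 \<le> \<epsilon>"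
    and eps_gap: "Sset f V u0 \<noteq> Rset f V u0 \<Longrightarrow>
                  \<epsilon> < phi f V u0 - Max (f u0 ` (Sset f V u0 - Rset f V u0))"
    and A: "A \<subseteq> V" "finite A"
    and delta: "0 \<le> \<delta>"
    and delta_gap: "Sset f V u0 \<noteq> Rset f V u0 \<Longrightarrow>
                  2 * l * \<delta> < (phi f V u0 - Max (f u0 ` (Sset f V u0 - Rset f V u0))) - \<epsilon>"
    and dH1: "dH (Rset f V u0) A \<le> \<delta>" and dH2: "dH A (Sset f V u0) \<le> \<delta>"
  shows "\<forall>z' \<in> convex hull (G u0 ` RepsA f A \<epsilon> u0). \<forall>u\<in>U.
           phi f V u - phi f V u0 \<ge> z' \<bullet> (u - u0) - 2 * r * \<delta> * B"
proof (intro ballI)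
  fix z' u assume z': "z' \<in> convex hull (G u0 ` RepsA f A \<epsilon> u0)" and u: "u \<in> U"
  have u_close: "norm (u - u0) \<le> 2 * B"
    using norm_triangle_ineq4[of u u0] U_bound u u0 by (smt (verit))
  have "(u - u0) \<bullet> G u0 v \<le> phi f V u - phi f V u0 + 2 * r * \<delta> * B"
    if v: "v \<in> RepsA f A \<epsilon> u0" for v
  proof -
    obtain w where w: "w \<in> Rset f V u0" "dist v w \<le> \<delta>"
      using RepsA_close_to_Rset[OF V_compact f_lip[rule_format, OF u0] R_fin S_fin A delta_gap
          dH1 dH2 v] by blast
    have wV: "w \<in> V" and vV: "v \<in> V" using w(1) v A unfolding Rset_def RepsA_def by auto
    have "norm (G u0 v - G u0 w) \<le> r * \<delta>"
      using lipschitz_on_dist_le[OF G_lip[rule_format, OF u0] vV wV w(2)] by (simp add: dist_norm)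
    moreover have "f u w \<le> phi f V u"
      using phi_upper[where f = f and u = u, OF V_compact lipschitz_on_continuous_on[OF f_lip[rule_format, OF u]] wV] .
    ultimately have "phi f V u - phi f V u0 \<ge> G u0 v \<bullet> (u - u0) - r * \<delta> * (2 * B)"
      using Rset_gradient_approx_subgradient[OF w(1) _ _ _ _ u_close] f_convex f_grad wV
      by blast
    then show ?thesis by (simp add: inner_commute)
  qed
  then have "(u - u0) \<bullet> z' \<le> phi f V u - phi f V u0 + 2 * r * \<delta> * B"
    using convex_hull_inner_le[OF _ z'] by blast
  then show "phi f V u - phi f V u0 \<ge> z' \<bullet> (u - u0) - 2 * r * \<delta> * B"
    by (simp add: inner_commute)
qed

end
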